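(* For $\varepsilon\geq0$, $\mathsf S_\varepsilon$ is an endofunctor of the category of $n$-parameter persistence modules, and for every $n$-parameter persistence module $M$, $d_I(M,\mathsf S_\varepsilon(M))\leq\varepsilon$.
   Context: An $n$-parameter persistence module is a functor $M:(\mathbb{R}^n,\leq)\to\mathbf{Vect}$ (equivalently an $\mathbb{R}^n$-graded module over the monoid ring of $([0,\infty)^n,+)$). The internal translation $\varphi^M_\varepsilon$ is the morphism $M\to M\circ T_\varepsilon$ given at $\vec a$ by $M(\vec a\leq\vec a+\varepsilon\vec1)$, where $T_\varepsilon(\vec a)=\vec a+\varepsilon\vec1$, $\vec1=(1,\dots,1)$ (equivalently, multiplication by $\vec x^{\varepsilon\vec1}$). The $\varepsilon$-simplification is $\mathsf S_\varepsilon(M)=(\mathrm{Im}\,\varphi^M_\varepsilon)\circ T_\varepsilon$, i.e. $\mathsf S_\varepsilon(M)_{\vec a}=\mathrm{Im}(M_{\vec a}\to M_{\vec a+\varepsilon\vec1})$. $M,N$ are $\varepsilon$-interleaved if there are natural maps $M_{\vec a}\to N_{\vec a+\varepsilon\vec1}$, $N_{\vec a}\to M_{\vec a+\varepsilon\vec1}$ whose composites are the internal maps shifting by $2\varepsilon\vec1$; $d_I$ is the infimum of such $\varepsilon$. *)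

theory Defs
  imports "HOL-Analysis.Analysis"
begin

text \<open>An n-parameter persistence module over a field 'k: for each a in R^n a subspace
  sp M a of an ambient 'k-vector space 'v (scalar multiplication s), and for a \<le> b a
  linear map mp M a b carrying sp M a into sp M b, functorial on the carriers.\<close>

record ('n::finite, 'v) pmod =
  sp :: "real^'n \<Rightarrow> 'v set"
  mp :: "real^'n \<Rightarrow> real^'n \<Rightarrow> 'v \<Rightarrow> 'v"

definition shift :: "real \<Rightarrow> real^'n::finite \<Rightarrow> real^'n" where
  "shift e a = a + (\<chi> i. e)"

definition is_pmod :: "('k::field \<Rightarrow> 'v::ab_group_add \<Rightarrow> 'v) \<Rightarrow> ('n::finite, 'v) pmod \<Rightarrow> bool" where
  "is_pmod s M \<longleftrightarrow>
     (\<forall>a. module.subspace s (sp M a)) \<and>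
     (\<forall>a b. a \<le> b \<longrightarrow> Vector_Spaces.linear s s (mp M a b) \<and> mp M a b ` sp M a \<subseteq> sp M b) \<and>
     (\<forall>a x. x \<in> sp M a \<longrightarrow> mp M a a x = x) \<and>
     (\<forall>a b c x. a \<le> b \<longrightarrow> b \<le> c \<longrightarrow> x \<in> sp M a \<longrightarrow> mp M b c (mp M a b x) = mp M a c x)"

definition is_pmorph :: "('k::field \<Rightarrow> 'v::ab_group_add \<Rightarrow> 'v) \<Rightarrow> ('k \<Rightarrow> 'w::ab_group_add \<Rightarrow> 'w) \<Rightarrow>
    ('n::finite, 'v) pmod \<Rightarrow> ('n, 'w) pmod \<Rightarrow> (real^'n \<Rightarrow> 'v \<Rightarrow> 'w) \<Rightarrow> bool" where
  "is_pmorph s1 s2 M N f \<longleftrightarrow>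
     (\<forall>a. Vector_Spaces.linear s1 s2 (f a) \<and> f a ` sp M a \<subseteq> sp N a) \<and>
     (\<forall>a b x. a \<le> b \<longrightarrow> x \<in> sp M a \<longrightarrow> f b (mp M a b x) = mp N a b (f a x))"

definition pmorph_eq :: "('n::finite, 'v) pmod \<Rightarrow> (real^'n \<Rightarrow> 'v \<Rightarrow> 'w) \<Rightarrow> (real^'n \<Rightarrow> 'v \<Rightarrow> 'w) \<Rightarrow> bool" where
  "pmorph_eq M f g \<longleftrightarrow> (\<forall>a. \<forall>x \<in> sp M a. f a x = g a x)"

definition simp_obj :: "real \<Rightarrow> ('n::finite, 'v) pmod \<Rightarrow> ('n, 'v) pmod" where
  "simp_obj e M = \<lparr> sp = (\<lambda>a. mp M a (shift e a) ` sp M a),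
                    mp = (\<lambda>a b. mp M (shift e a) (shift e b)) \<rparr>"

definition simp_mor :: "real \<Rightarrow> (real^'n::finite \<Rightarrow> 'v \<Rightarrow> 'w) \<Rightarrow> (real^'n \<Rightarrow> 'v \<Rightarrow> 'w)" where
  "simp_mor e f = (\<lambda>a. f (shift e a))"

definition interleaved :: "('k::field \<Rightarrow> 'v::ab_group_add \<Rightarrow> 'v) \<Rightarrow> ('k \<Rightarrow> 'w::ab_group_add \<Rightarrow> 'w) \<Rightarrow> real \<Rightarrow>
    ('n::finite, 'v) pmod \<Rightarrow> ('n, 'w) pmod \<Rightarrow> bool" where
  "interleaved s1 s2 e M N \<longleftrightarrow>
    (\<exists>phi psi.
      (\<forall>a. Vector_Spaces.linear s1 s2 (phi a) \<and> phi a ` sp M a \<subseteq> sp N (shift e a)) \<and>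
      (\<forall>a. Vector_Spaces.linear s2 s1 (psi a) \<and> psi a ` sp N a \<subseteq> sp M (shift e a)) \<and>
      (\<forall>a b x. a \<le> b \<longrightarrow> x \<in> sp M a \<longrightarrow>
          phi b (mp M a b x) = mp N (shift e a) (shift e b) (phi a x)) \<and>
      (\<forall>a b y. a \<le> b \<longrightarrow> y \<in> sp N a \<longrightarrow>
          psi b (mp N a b y) = mp M (shift e a) (shift e b) (psi a y)) \<and>
      (\<forall>a. \<forall>x \<in> sp M a. psi (shift e a) (phi a x) = mp M a (shift (2 * e) a) x) \<and>
      (\<forall>a. \<forall>y \<in> sp N a. phi (shift e a) (psi a y) = mp N a (shift (2 * e) a) y))"

text \<open>Interleaving distance (infimum over eps \<ge> 0; +\<infinity> if none).\<close>
definition d_I :: "('k::field \<Rightarrow> 'v::ab_group_add \<Rightarrow> 'v) \<Rightarrow> ('k \<Rightarrow> 'w::ab_group_add \<Rightarrow> 'w) \<Rightarrow>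
    ('n::finite, 'v) pmod \<Rightarrow> ('n, 'w) pmod \<Rightarrow> ereal" where
  "d_I s1 s2 M N = Inf {ereal e | e. e \<ge> 0 \<and> interleaved s1 s2 e M N}"

end

theory Submission
  imports Defs
begin

text \<open>\<open>S\<^sub>\<epsilon>(M)\<close> is the image of the internal translation \<open>M \<rightarrow> M \<circ> T\<^sub>\<epsilon>\<close>, hence a
  submodule of the shifted module \<open>M \<circ> T\<^sub>\<epsilon>\<close>, and \<open>S\<^sub>\<epsilon>(f)\<close> is the restriction of \<open>f \<circ> T\<^sub>\<epsilon>\<close>,
  which maps images to images by naturality of \<open>f\<close>; so functoriality is inherited from
  that of shifting. An \<open>\<epsilon>\<close>-interleaving of \<open>M\<close> and \<open>S\<^sub>\<epsilon>(M)\<close> consists of the structure maps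
  \<open>M(a \<le> a + 2\<epsilon>)\<close>, whose image lies in \<open>S\<^sub>\<epsilon>(M)\<close> at \<open>a + \<epsilon>\<close> because they factor through
  \<open>M(a + \<epsilon>)\<close>, and of the inclusions of \<open>S\<^sub>\<epsilon>(M)\<close> at \<open>a\<close> into \<open>M\<close> at \<open>a + \<epsilon>\<close>; both composites
  are structure maps by functoriality of \<open>M\<close>.\<close>

lemma le_shift: "e \<ge> 0 \<Longrightarrow> a \<le> shift e a"
  by (simp add: shift_def less_eq_vec_def)

lemma shift_mono: "a \<le> b \<Longrightarrow> shift e a \<le> shift e b"
  by (simp add: shift_def less_eq_vec_def)

lemma shift_shift: "shift e (shift d a) = shift (d + e) a"
  by (simp add: shift_def vec_eq_iff)

lemma shift_shift_same: "shift e (shift e a) = shift (2 * e) a"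
  \<comment> \<open>not \<open>simp\<close>: it loops between \<open>e + e\<close> and \<open>2 * e\<close>\<close>
  unfolding shift_shift mult_2 ..

lemma shift_commute: "shift e (shift d a) = shift d (shift e a)"
  by (simp add: shift_shift add.commute)

lemma sp_simp_obj: "sp (simp_obj e M) a = mp M a (shift e a) ` sp M a"
  by (simp add: simp_obj_def)

lemma mp_simp_obj: "mp (simp_obj e M) a b = mp M (shift e a) (shift e b)"
  by (simp add: simp_obj_def)

lemma is_pmodD:
  assumes "is_pmod s M"
  shows is_pmod_subspace: "module.subspace s (sp M a)"
    and is_pmod_linear: "a \<le> b \<Longrightarrow> Vector_Spaces.linear s s (mp M a b)"
    and is_pmod_mp_in_sp: "a \<le> b \<Longrightarrow> x \<in> sp M a \<Longrightarrow> mp M a b x \<in> sp M b"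
    and is_pmod_mp_id: "x \<in> sp M a \<Longrightarrow> mp M a a x = x"
    and is_pmod_mp_comp: "a \<le> b \<Longrightarrow> b \<le> c \<Longrightarrow> x \<in> sp M a \<Longrightarrow> mp M b c (mp M a b x) = mp M a c x"
  using assms unfolding is_pmod_def by blast+

lemma is_pmod_vector_space:
  assumes "is_pmod s (M :: ('n::finite, 'v::ab_group_add) pmod)"
  shows "vector_space s"
proof -
  have "Vector_Spaces.linear s s (mp M 0 0)"
    using is_pmod_linear[OF assms] by simp
  then show ?thesis
    unfolding Vector_Spaces.linear_def by blast
qed

lemma is_pmorphD:
  assumes "is_pmorph s1 s2 M N f"
  shows is_pmorph_linear: "Vector_Spaces.linear s1 s2 (f a)"
    and is_pmorph_in_sp: "x \<in> sp M a \<Longrightarrow> f a x \<in> sp N a"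
    and is_pmorph_natural: "a \<le> b \<Longrightarrow> x \<in> sp M a \<Longrightarrow> f b (mp M a b x) = mp N a b (f a x)"
  using assms unfolding is_pmorph_def by blast+

lemma sp_simp_obj_subset:
  assumes "is_pmod s M" and "e \<ge> 0"
  shows "sp (simp_obj e M) a \<subseteq> sp M (shift e a)"
  using is_pmod_mp_in_sp[OF assms(1) le_shift[OF assms(2)]] by (auto simp: sp_simp_obj)

lemma mp_translation_natural:
  assumes M: "is_pmod s M" and e: "e \<ge> 0" and ab: "a \<le> b" and x: "x \<in> sp M a"
  shows "mp M (shift e a) (shift e b) (mp M a (shift e a) x) = mp M b (shift e b) (mp M a b x)"
proof -
  have "mp M (shift e a) (shift e b) (mp M a (shift e a) x) = mp M a (shift e b) x"
    using is_pmod_mp_comp[OF M le_shift[OF e] shift_mono[OF ab] x] .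
  also have "\<dots> = mp M b (shift e b) (mp M a b x)"
    using is_pmod_mp_comp[OF M ab le_shift[OF e] x] by (rule sym)
  finally show ?thesis .
qed

lemma is_pmod_simp_obj:
  fixes M :: "('n::finite, 'v::ab_group_add) pmod"
  assumes M: "is_pmod s M" and e: "e \<ge> 0"
  shows "is_pmod s (simp_obj e M)"
  unfolding is_pmod_def sp_simp_obj mp_simp_obj
proof (intro conjI allI impI)
  fix a :: "real^'n"
  have "module_hom s s (mp M a (shift e a))"
    using is_pmod_linear[OF M le_shift[OF e]] by (simp add: module_hom_iff_linear)
  then show "module.subspace s (mp M a (shift e a) ` sp M a)"
    using module_hom.subspace_image is_pmod_subspace[OF M] by blast
next
  fix a b :: "real^'n" assume ab: "a \<le> b"
  show "Vector_Spaces.linear s s (mp M (shift e a) (shift e b))"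
    using is_pmod_linear[OF M shift_mono[OF ab]] .
  show "mp M (shift e a) (shift e b) ` mp M a (shift e a) ` sp M a \<subseteq> mp M b (shift e b) ` sp M b"
    using mp_translation_natural[OF M e ab] is_pmod_mp_in_sp[OF M ab] by auto
next
  fix a :: "real^'n" and x :: 'v
  assume "x \<in> mp M a (shift e a) ` sp M a"
  then show "mp M (shift e a) (shift e a) x = x"
    using sp_simp_obj_subset[OF M e] is_pmod_mp_id[OF M] by (auto simp: sp_simp_obj)
next
  fix a b c :: "real^'n" and x :: 'v
  assume "a \<le> b" "b \<le> c" and x: "x \<in> mp M a (shift e a) ` sp M a"
  have "x \<in> sp M (shift e a)"
    using sp_simp_obj_subset[OF M e] x by (auto simp: sp_simp_obj)
  then show "mp M (shift e b) (shift e c) (mp M (shift e a) (shift e b) x) = mp M (shift e a) (shift e c) x"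
    using is_pmod_mp_comp[OF M shift_mono[of a b e] shift_mono[of b c e]] \<open>a \<le> b\<close> \<open>b \<le> c\<close> by blast
qed

lemma is_pmorph_simp_mor:
  fixes M :: "('n::finite, 'v::ab_group_add) pmod"
  assumes M: "is_pmod s1 M" and f: "is_pmorph s1 s2 M N f" and e: "e \<ge> 0"
  shows "is_pmorph s1 s2 (simp_obj e M) (simp_obj e N) (simp_mor e f)"
  unfolding is_pmorph_def sp_simp_obj mp_simp_obj simp_mor_def
proof (intro conjI allI impI ballI)
  fix a :: "real^'n"
  show "Vector_Spaces.linear s1 s2 (f (shift e a))"
    using is_pmorph_linear[OF f] .
  show "f (shift e a) ` mp M a (shift e a) ` sp M a \<subseteq> mp N a (shift e a) ` sp N a"
    using is_pmorph_natural[OF f le_shift[OF e]] is_pmorph_in_sp[OF f] by auto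
next
  fix a b :: "real^'n" and x :: 'v
  assume "a \<le> b" and x: "x \<in> mp M a (shift e a) ` sp M a"
  have "x \<in> sp M (shift e a)"
    using sp_simp_obj_subset[OF M e] x by (auto simp: sp_simp_obj)
  then show "f (shift e b) (mp M (shift e a) (shift e b) x) = mp N (shift e a) (shift e b) (f (shift e a) x)"
    using is_pmorph_natural[OF f shift_mono[of a b e]] \<open>a \<le> b\<close> by blast
qed

lemma interleaved_simp_obj:
  fixes M :: "('n::finite, 'v::ab_group_add) pmod"
  assumes M: "is_pmod s M" and e: "e \<ge> 0"
  shows "interleaved s s e M (simp_obj e M)"
  unfolding interleaved_def sp_simp_obj mp_simp_obj
proof (rule exI[of _ "\<lambda>a. mp M a (shift (2 * e) a)"], rule exI[of _ "\<lambda>a. id"],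
    intro conjI allI ballI impI)
  have e2: "2 * e \<ge> 0" using e by simp
  fix a :: "real^'n"
  show "Vector_Spaces.linear s s (mp M a (shift (2 * e) a))"
    using is_pmod_linear[OF M le_shift[OF e2]] .
  show "Vector_Spaces.linear s s id"
    using vector_space.linear_id[OF is_pmod_vector_space[OF M]] .
  show "id ` mp M a (shift e a) ` sp M a \<subseteq> sp M (shift e a)"
    using sp_simp_obj_subset[OF M e] by (simp add: sp_simp_obj)
  have "mp M a (shift (2 * e) a) x = mp M (shift e a) (shift e (shift e a)) (mp M a (shift e a) x)"
    if "x \<in> sp M a" for x
    using is_pmod_mp_comp[OF M le_shift[OF e] le_shift[OF e] that] by (simp add: shift_shift_same)
  then show "mp M a (shift (2 * e) a) ` sp M a \<subseteq> mp M (shift e a) (shift e (shift e a)) ` sp M (shift e a)"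
    using is_pmod_mp_in_sp[OF M le_shift[OF e]] by auto
next
  fix a b :: "real^'n" and x :: 'v
  assume ab: "a \<le> b" and x: "x \<in> sp M a"
  have "0 \<le> 2 * e" using e by simp
  from mp_translation_natural[OF M this ab x]
  show "mp M b (shift (2 * e) b) (mp M a b x) =
      mp M (shift e (shift e a)) (shift e (shift e b)) (mp M a (shift (2 * e) a) x)"
    unfolding shift_shift_same by (rule sym)
next
  fix a b :: "real^'n" and y :: 'v
  show "id (mp M (shift e a) (shift e b) y) = mp M (shift e a) (shift e b) (id y)"
    by simp
next
  fix a :: "real^'n" and x :: 'v
  show "id (mp M a (shift (2 * e) a) x) = mp M a (shift (2 * e) a) x"
    by simp
next
  fix a :: "real^'n" and y :: 'v
  show "mp M (shift e a) (shift (2 * e) (shift e a)) (id y) =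
      mp M (shift e a) (shift e (shift (2 * e) a)) y"
    by (simp only: id_apply shift_commute[of "2 * e" e])
qed

lemma d_I_le_if_interleaved:
  assumes "interleaved s1 s2 e M N" and "e \<ge> 0"
  shows "d_I s1 s2 M N \<le> ereal e"
  unfolding d_I_def using assms by (auto intro!: Inf_lower)

theorem mainTheorem9:
  fixes e :: real
    and s1 :: "'k::field \<Rightarrow> 'u::ab_group_add \<Rightarrow> 'u"
    and s2 :: "'k \<Rightarrow> 'v::ab_group_add \<Rightarrow> 'v"
    and s3 :: "'k \<Rightarrow> 'w::ab_group_add \<Rightarrow> 'w"
  assumes "e \<ge> 0"
    and "vector_space s1" and "vector_space s2" and "vector_space s3"
  shows
    \<comment> \<open>S_e maps persistence modules to persistence modules\<close>
    "(\<forall>M :: ('n::finite, 'u) pmod. is_pmod s1 M \<longrightarrow> is_pmod s1 (simp_obj e M))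
     \<comment> \<open>S_e maps morphisms to morphisms\<close>
   \<and> (\<forall>(M :: ('n, 'u) pmod) (N :: ('n, 'v) pmod) f.
        is_pmod s1 M \<longrightarrow> is_pmod s2 N \<longrightarrow> is_pmorph s1 s2 M N f \<longrightarrow>
        is_pmorph s1 s2 (simp_obj e M) (simp_obj e N) (simp_mor e f))
     \<comment> \<open>S_e preserves identities\<close>
   \<and> (\<forall>M :: ('n, 'u) pmod. is_pmod s1 M \<longrightarrow>
        pmorph_eq (simp_obj e M) (simp_mor e (\<lambda>a. id)) (\<lambda>a. id))
     \<comment> \<open>S_e preserves composition\<close>
   \<and> (\<forall>(M :: ('n, 'u) pmod) (N :: ('n, 'v) pmod) (P :: ('n, 'w) pmod) f g.
        is_pmod s1 M \<longrightarrow> is_pmod s2 N \<longrightarrow> is_pmod s3 P \<longrightarrow>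
        is_pmorph s1 s2 M N f \<longrightarrow> is_pmorph s2 s3 N P g \<longrightarrow>
        pmorph_eq (simp_obj e M) (simp_mor e (\<lambda>a. g a \<circ> f a))
                  (\<lambda>a. simp_mor e g a \<circ> simp_mor e f a))
     \<comment> \<open>d_I(M, S_e M) \<le> e\<close>
   \<and> (\<forall>M :: ('n, 'u) pmod. is_pmod s1 M \<longrightarrow> d_I s1 s1 M (simp_obj e M) \<le> ereal e)"
proof (intro conjI allI impI)
  fix M :: "('n, 'u) pmod"
  assume "is_pmod s1 M"
  then show "is_pmod s1 (simp_obj e M)"
    using is_pmod_simp_obj assms(1) by blast
  show "d_I s1 s1 M (simp_obj e M) \<le> ereal e"
    using interleaved_simp_obj[OF \<open>is_pmod s1 M\<close> assms(1)] assms(1) by (rule d_I_le_if_interleaved)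
  show "pmorph_eq (simp_obj e M) (simp_mor e (\<lambda>a. id)) (\<lambda>a. id)"
    by (simp add: pmorph_eq_def simp_mor_def)
next
  fix M :: "('n, 'u) pmod" and N :: "('n, 'v) pmod" and f
  assume "is_pmod s1 M" "is_pmorph s1 s2 M N f"
  then show "is_pmorph s1 s2 (simp_obj e M) (simp_obj e N) (simp_mor e f)"
    using is_pmorph_simp_mor assms(1) by blast
next
  fix M :: "('n, 'u) pmod" and f g
  show "pmorph_eq (simp_obj e M) (simp_mor e (\<lambda>a. g a \<circ> f a)) (\<lambda>a. simp_mor e g a \<circ> simp_mor e f a)"
    by (simp add: pmorph_eq_def simp_mor_def)
qed

end
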